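(* Let $\mathcal P=\langle F,R\rangle$ be a program and $H$ a hypothesis. Then $T_R(F)$ and the support $s^H_{\mathcal P}$ are compatible.
   Context: Let $\langle \mathcal{B},\le_t,\le_k\rangle$ be a complete, infinitely distributive bilattice with negation satisfying the infinitary interlacing conditions; $\wedge,\vee$ are meet/join for $\le_t$, $\otimes,\oplus$ meet/join for $\le_k$, $\mathcal U$ is the bottom of $\le_k$. A closed formula is built from ground literals and elements of $\mathcal B$ using $\wedge,\vee,\otimes,\oplus,\exists,\forall$ (quantifiers over closed terms). A program $\mathcal P=\langle F,R\rangle$ consists of a function $F$ from the Herbrand base $\mathcal{HB}_{\mathcal P}$ to $\mathcal B$ and a finite set $R$ of ground clauses $A\leftarrow B$, each ground atom being the head of at most one clause; $Head(\mathcal P)$ is the set of heads. An interpretation (or hypothesis) is a function $I:\mathcal{HB}_{\mathcal P}\to\mathcal B$, extended to closed formulas homomorphically ($I(\neg A)=\neg I(A)$, $I(X\wedge Y)=I(X)\wedge I(Y)$ etc., $\exists$ as $\bigvee$, $\forall$ as $\bigwedge$ over closed instances). Operations on interpretations are pointwise. $I,J$ are compatible if $I(A)\neq\mathcal U$ and $J(A)\neq\mathcal U$ imply $I(A)=J(A)$ for all $A$. $I\le J$ means $I(A)\neq\mathcal U\Rightarrow I(A)=J(A)$ for all $A$. $I_{/S}$ is $I$ on $S$ and $\mathcal U$ elsewhere. $B\equiv_I\alpha$ means $J(B)=\alpha$ for all $J$ with $I\le J$. $T_R(I)(A)=\alpha$ if there is a clause $A\leftarrow B$ in $R$ with $B\equiv_I\alpha$,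 and $\mathcal U$ otherwise. $H'$ is sound w.r.t. $\mathcal P$ if $F,H'$ are compatible and $H'_{/Head(\mathcal P)}\le T_R(F\oplus H')$. The support $s^H_{\mathcal P}$ of $H$ is the maximal (w.r.t. $\le$) interpretation $H'\le H$ that is sound w.r.t. $\mathcal P$; it equals $\bigoplus\{H'\mid H'\le H,\ H' \text{ sound w.r.t. } \mathcal P\}$. *)

theory Defs
  imports Main
begin

definition is_lub :: "('v \<Rightarrow> 'v \<Rightarrow> bool) \<Rightarrow> 'v set \<Rightarrow> 'v \<Rightarrow> bool" where
  "is_lub le S x \<longleftrightarrow> (\<forall>s\<in>S. le s x) \<and> (\<forall>y. (\<forall>s\<in>S. le s y) \<longrightarrow> le x y)"

definition is_glb :: "('v \<Rightarrow> 'v \<Rightarrow> bool) \<Rightarrow> 'v set \<Rightarrow> 'v \<Rightarrow> bool" where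
  "is_glb le S x \<longleftrightarrow> (\<forall>s\<in>S. le x s) \<and> (\<forall>y. (\<forall>s\<in>S. le y s) \<longrightarrow> le y x)"

definition lub :: "('v \<Rightarrow> 'v \<Rightarrow> bool) \<Rightarrow> 'v set \<Rightarrow> 'v" where
  "lub le S = (THE x. is_lub le S x)"

definition glb :: "('v \<Rightarrow> 'v \<Rightarrow> bool) \<Rightarrow> 'v set \<Rightarrow> 'v" where
  "glb le S = (THE x. is_glb le S x)"

definition complete_po :: "('v \<Rightarrow> 'v \<Rightarrow> bool) \<Rightarrow> bool" where
  "complete_po le \<longleftrightarrow>
     (\<forall>x. le x x) \<and> (\<forall>x y. le x y \<longrightarrow> le y x \<longrightarrow> x = y) \<and>
     (\<forall>x y z. le x y \<longrightarrow> le y z \<longrightarrow> le x z) \<and>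
     (\<forall>S. (\<exists>x. is_lub le S x) \<and> (\<exists>x. is_glb le S x))"

text \<open>Binary operations: \<open>\<and>,\<or>\<close> (truth order), \<open>\<otimes>,\<oplus>\<close> (knowledge order); infinitary
  versions \<open>\<Or>,\<And>\<close> (truth) and \<open>\<Sum>,\<Prod>\<close> (knowledge); \<open>\<U>\<close> = bottom of knowledge order.\<close>

definition bmeet :: "('v \<Rightarrow> 'v \<Rightarrow> bool) \<Rightarrow> 'v \<Rightarrow> 'v \<Rightarrow> 'v" where
  "bmeet le a b = glb le {a, b}"

definition bjoin :: "('v \<Rightarrow> 'v \<Rightarrow> bool) \<Rightarrow> 'v \<Rightarrow> 'v \<Rightarrow> 'v" where
  "bjoin le a b = lub le {a, b}"

definition Ubot :: "('v \<Rightarrow> 'v \<Rightarrow> bool) \<Rightarrow> 'v" where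
  "Ubot kle = glb kle UNIV"

definition inf_distrib_bilattice ::
  "('v \<Rightarrow> 'v \<Rightarrow> bool) \<Rightarrow> ('v \<Rightarrow> 'v \<Rightarrow> bool) \<Rightarrow> ('v \<Rightarrow> 'v) \<Rightarrow> bool" where
  "inf_distrib_bilattice tle kle neg \<longleftrightarrow>
     complete_po tle \<and> complete_po kle \<and>
     \<comment> \<open>negation\<close>
     (\<forall>a b. tle a b \<longrightarrow> tle (neg b) (neg a)) \<and>
     (\<forall>a b. kle a b \<longrightarrow> kle (neg a) (neg b)) \<and>
     (\<forall>a. neg (neg a) = a) \<and>
     \<comment> \<open>infinitary interlacing\<close>
     (\<forall>(I::'v set) f g. (\<forall>i\<in>I. kle (f i) (g i)) \<longrightarrow>
        kle (lub tle (f ` I)) (lub tle (g ` I)) \<and> kle (glb tle (f ` I)) (glb tle (g ` I))) \<and>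
     (\<forall>(I::'v set) f g. (\<forall>i\<in>I. tle (f i) (g i)) \<longrightarrow>
        tle (lub kle (f ` I)) (lub kle (g ` I)) \<and> tle (glb kle (f ` I)) (glb kle (g ` I))) \<and>
     \<comment> \<open>infinite distributivity: each binary operation distributes over every infinitary
        operation other than its own infinitary version\<close>
     (\<forall>a S. S \<noteq> {} \<longrightarrow>
        (\<forall>op\<in>{bmeet tle, bjoin tle, bmeet kle, bjoin kle}.
          \<forall>Op\<in>{lub tle, glb tle, lub kle, glb kle}.
            \<not> ((op = bmeet tle \<and> Op = glb tle) \<or> (op = bjoin tle \<and> Op = lub tle) \<or>
               (op = bmeet kle \<and> Op = glb kle) \<or> (op = bjoin kle \<and> Op = lub kle)) \<longrightarrow>
            op a (Op S) = Op ((\<lambda>s. op a s) ` S)))"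

text \<open>Closed formulas over ground atoms \<open>'a\<close> (the Herbrand base), closed terms \<open>'t\<close>
  (quantifiers range over all closed terms; a quantified formula is given by the family of its
  closed instances) and bilattice values \<open>'v\<close>.\<close>

datatype ('a, 't, 'v) form =
    Lit 'a
  | NLit 'a
  | Val 'v
  | FAnd "('a, 't, 'v) form" "('a, 't, 'v) form"
  | FOr "('a, 't, 'v) form" "('a, 't, 'v) form"
  | FOtimes "('a, 't, 'v) form" "('a, 't, 'v) form"
  | FOplus "('a, 't, 'v) form" "('a, 't, 'v) form"
  | FEx "'t \<Rightarrow> ('a, 't, 'v) form"
  | FAll "'t \<Rightarrow> ('a, 't, 'v) form"

primrec eval :: "('v \<Rightarrow> 'v \<Rightarrow> bool) \<Rightarrow> ('v \<Rightarrow> 'v \<Rightarrow> bool) \<Rightarrow> ('v \<Rightarrow> 'v) \<Rightarrow> ('a \<Rightarrow> 'v)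
    \<Rightarrow> ('a, 't, 'v) form \<Rightarrow> 'v" where
  "eval tle kle neg I (Lit A) = I A"
| "eval tle kle neg I (NLit A) = neg (I A)"
| "eval tle kle neg I (Val v) = v"
| "eval tle kle neg I (FAnd X Y) = bmeet tle (eval tle kle neg I X) (eval tle kle neg I Y)"
| "eval tle kle neg I (FOr X Y) = bjoin tle (eval tle kle neg I X) (eval tle kle neg I Y)"
| "eval tle kle neg I (FOtimes X Y) = bmeet kle (eval tle kle neg I X) (eval tle kle neg I Y)"
| "eval tle kle neg I (FOplus X Y) = bjoin kle (eval tle kle neg I X) (eval tle kle neg I Y)"
| "eval tle kle neg I (FEx f) = lub tle (range (\<lambda>t. eval tle kle neg I (f t)))"
| "eval tle kle neg I (FAll f) = glb tle (range (\<lambda>t. eval tle kle neg I (f t)))"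

text \<open>A program: a function \<open>F\<close> on the Herbrand base and a finite set of ground clauses
  \<open>(A, B)\<close> meaning \<open>A \<leftarrow> B\<close>, each atom the head of at most one clause.\<close>

definition program :: "('a \<Rightarrow> 'v) \<Rightarrow> ('a \<times> ('a, 't, 'v) form) set \<Rightarrow> bool" where
  "program F R \<longleftrightarrow> finite R \<and> (\<forall>A B B'. (A, B) \<in> R \<longrightarrow> (A, B') \<in> R \<longrightarrow> B = B')"

definition heads :: "('a \<times> ('a, 't, 'v) form) set \<Rightarrow> 'a set" where
  "heads R = fst ` R"

definition compatible :: "('v \<Rightarrow> 'v \<Rightarrow> bool) \<Rightarrow> ('a \<Rightarrow> 'v) \<Rightarrow> ('a \<Rightarrow> 'v) \<Rightarrow> bool" where
  "compatible kle I J \<longleftrightarrow>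
     (\<forall>A. I A \<noteq> Ubot kle \<longrightarrow> J A \<noteq> Ubot kle \<longrightarrow> I A = J A)"

definition info_le :: "('v \<Rightarrow> 'v \<Rightarrow> bool) \<Rightarrow> ('a \<Rightarrow> 'v) \<Rightarrow> ('a \<Rightarrow> 'v) \<Rightarrow> bool" where
  "info_le kle I J \<longleftrightarrow> (\<forall>A. I A \<noteq> Ubot kle \<longrightarrow> I A = J A)"

definition restrict_interp :: "('v \<Rightarrow> 'v \<Rightarrow> bool) \<Rightarrow> ('a \<Rightarrow> 'v) \<Rightarrow> 'a set \<Rightarrow> ('a \<Rightarrow> 'v)" where
  "restrict_interp kle I S = (\<lambda>A. if A \<in> S then I A else Ubot kle)"

definition interp_oplus :: "('v \<Rightarrow> 'v \<Rightarrow> bool) \<Rightarrow> ('a \<Rightarrow> 'v) \<Rightarrow> ('a \<Rightarrow> 'v) \<Rightarrow> ('a \<Rightarrow> 'v)" where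
  "interp_oplus kle I J = (\<lambda>A. bjoin kle (I A) (J A))"

definition equiv_under ::
  "('v \<Rightarrow> 'v \<Rightarrow> bool) \<Rightarrow> ('v \<Rightarrow> 'v \<Rightarrow> bool) \<Rightarrow> ('v \<Rightarrow> 'v) \<Rightarrow> ('a \<Rightarrow> 'v)
    \<Rightarrow> ('a, 't, 'v) form \<Rightarrow> 'v \<Rightarrow> bool" where
  "equiv_under tle kle neg I B \<alpha> \<longleftrightarrow> (\<forall>J. info_le kle I J \<longrightarrow> eval tle kle neg J B = \<alpha>)"

definition T_op ::
  "('v \<Rightarrow> 'v \<Rightarrow> bool) \<Rightarrow> ('v \<Rightarrow> 'v \<Rightarrow> bool) \<Rightarrow> ('v \<Rightarrow> 'v)
    \<Rightarrow> ('a \<times> ('a, 't, 'v) form) set \<Rightarrow> ('a \<Rightarrow> 'v) \<Rightarrow> ('a \<Rightarrow> 'v)" where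
  "T_op tle kle neg R I = (\<lambda>A.
     if \<exists>B \<alpha>. (A, B) \<in> R \<and> equiv_under tle kle neg I B \<alpha>
     then (SOME \<alpha>. \<exists>B. (A, B) \<in> R \<and> equiv_under tle kle neg I B \<alpha>)
     else Ubot kle)"

definition sound ::
  "('v \<Rightarrow> 'v \<Rightarrow> bool) \<Rightarrow> ('v \<Rightarrow> 'v \<Rightarrow> bool) \<Rightarrow> ('v \<Rightarrow> 'v)
    \<Rightarrow> ('a \<Rightarrow> 'v) \<Rightarrow> ('a \<times> ('a, 't, 'v) form) set \<Rightarrow> ('a \<Rightarrow> 'v) \<Rightarrow> bool" where
  "sound tle kle neg F R H' \<longleftrightarrow>
     compatible kle F H' \<and>
     info_le kle (restrict_interp kle H' (heads R)) (T_op tle kle neg R (interp_oplus kle F H'))"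

definition support ::
  "('v \<Rightarrow> 'v \<Rightarrow> bool) \<Rightarrow> ('v \<Rightarrow> 'v \<Rightarrow> bool) \<Rightarrow> ('v \<Rightarrow> 'v)
    \<Rightarrow> ('a \<Rightarrow> 'v) \<Rightarrow> ('a \<times> ('a, 't, 'v) form) set \<Rightarrow> ('a \<Rightarrow> 'v) \<Rightarrow> ('a \<Rightarrow> 'v)" where
  "support tle kle neg F R H = (\<lambda>A.
     lub kle ((\<lambda>H'. H' A) ` {H'. info_le kle H' H \<and> sound tle kle neg F R H'}))"

end

theory Submission
  imports Defs
begin

text \<open>If \<open>T\<^sub>R(F)(A) = \<alpha> \<noteq> \<U>\<close>, then \<open>A\<close> heads a clause \<open>A \<leftarrow> B\<close> with \<open>B \<equiv>\<^sub>F \<alpha>\<close>. A sound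
  \<open>H'\<close> that is defined at \<open>A\<close> takes there the value \<open>T\<^sub>R(F \<oplus> H')(A)\<close>; since \<open>H'\<close> is compatible
  with \<open>F\<close>, \<open>F \<oplus> H'\<close> extends \<open>F\<close>, so \<open>B \<equiv>\<^bsub>F \<oplus> H'\<^esub> \<alpha>\<close> and \<open>H'(A) = \<alpha>\<close>. Hence the support at \<open>A\<close>
  is the \<open>\<oplus>\<close>-join of values in \<open>{\<U>, \<alpha>}\<close>, which is \<open>\<U>\<close> or \<open>\<alpha>\<close>.\<close>

lemma lub_eqI:
  assumes "complete_po le" "is_lub le S x" shows "lub le S = x"
  unfolding lub_def
proof (rule the_equality)
  show "is_lub le S x" by fact
  fix y assume "is_lub le S y"
  with assms show "y = x" unfolding is_lub_def complete_po_def by blast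
qed

lemma glb_eqI:
  assumes "complete_po le" "is_glb le S x" shows "glb le S = x"
  unfolding glb_def
proof (rule the_equality)
  show "is_glb le S x" by fact
  fix y assume "is_glb le S y"
  with assms show "y = x" unfolding is_glb_def complete_po_def by blast
qed

lemma Ubot_least:
  assumes "complete_po kle" shows "kle (Ubot kle) x"
proof -
  obtain u where u: "is_glb kle UNIV u" using assms unfolding complete_po_def by blast
  then have "Ubot kle = u" unfolding Ubot_def by (rule glb_eqI[OF assms])
  with u show ?thesis unfolding is_glb_def by blast
qed

lemma lub_subset_Ubot_insert:
  assumes "complete_po kle" "S \<subseteq> {Ubot kle, a}"
  shows "lub kle S = (if a \<in> S then a else Ubot kle)"
proof (rule lub_eqI[OF assms(1)])
  show "is_lub kle S (if a \<in> S then a else Ubot kle)"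
    using assms Ubot_least[OF assms(1)] unfolding is_lub_def complete_po_def by auto
qed

lemma bjoin_Ubot_right:
  assumes "complete_po kle" shows "bjoin kle a (Ubot kle) = a"
  unfolding bjoin_def using lub_subset_Ubot_insert[OF assms, of "{a, Ubot kle}" a] by simp

lemma bjoin_idem:
  assumes "complete_po kle" shows "bjoin kle a a = a"
  unfolding bjoin_def using lub_subset_Ubot_insert[OF assms, of "{a}" a] by simp

lemma info_le_refl: "info_le kle I I"
  unfolding info_le_def by blast

lemma info_le_trans: "info_le kle I J \<Longrightarrow> info_le kle J K \<Longrightarrow> info_le kle I K"
  unfolding info_le_def by metis

lemma info_le_interp_oplus:
  assumes "complete_po kle" "compatible kle F H"
  shows "info_le kle F (interp_oplus kle F H)"
  unfolding info_le_def interp_oplus_def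
proof (intro allI impI)
  fix A assume "F A \<noteq> Ubot kle"
  with assms(2) have "H A = Ubot kle \<or> H A = F A" unfolding compatible_def by metis
  then show "F A = bjoin kle (F A) (H A)"
    using bjoin_Ubot_right[OF assms(1)] bjoin_idem[OF assms(1)] by metis
qed

lemma equiv_under_mono:
  "info_le kle I J \<Longrightarrow> equiv_under tle kle neg I B \<alpha> \<Longrightarrow> equiv_under tle kle neg J B \<alpha>"
  unfolding equiv_under_def using info_le_trans by blast

lemma equiv_under_unique:
  "equiv_under tle kle neg I B \<alpha> \<Longrightarrow> equiv_under tle kle neg I B \<beta> \<Longrightarrow> \<alpha> = \<beta>"
  unfolding equiv_under_def using info_le_refl by metis

lemma T_op_neq_UbotE:
  assumes "T_op tle kle neg R I A \<noteq> Ubot kle"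
  obtains B \<alpha> where "(A, B) \<in> R" "equiv_under tle kle neg I B \<alpha>"
  using assms unfolding T_op_def by (auto split: if_splits)

lemma T_op_eqI:
  assumes "program F R" "(A, B) \<in> R" "equiv_under tle kle neg I B \<alpha>"
  shows "T_op tle kle neg R I A = \<alpha>"
proof -
  have unique_body: "B' = B" if "(A, B') \<in> R" for B'
    using assms(1,2) that unfolding program_def by blast
  let ?P = "\<lambda>\<alpha>. \<exists>B. (A, B) \<in> R \<and> equiv_under tle kle neg I B \<alpha>"
  have "?P \<alpha>" using assms(2,3) by blast
  then have "?P (SOME \<alpha>. ?P \<alpha>)" by (rule someI)
  then obtain B' where "(A, B') \<in> R" "equiv_under tle kle neg I B' (SOME \<alpha>. ?P \<alpha>)"
    by blast
  with unique_body have "equiv_under tle kle neg I B (SOME \<alpha>. ?P \<alpha>)" by simp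
  with assms(3) have "(SOME \<alpha>. ?P \<alpha>) = \<alpha>" by (rule equiv_under_unique[symmetric])
  with \<open>?P \<alpha>\<close> show ?thesis unfolding T_op_def by auto
qed

lemma sound_eq_at_head:
  assumes "complete_po kle" "program F R" "sound tle kle neg F R H'"
    and "(A, B) \<in> R" "equiv_under tle kle neg F B \<alpha>" "H' A \<noteq> Ubot kle"
  shows "H' A = \<alpha>"
proof -
  have compat: "compatible kle F H'"
    and supported: "info_le kle (restrict_interp kle H' (heads R))
                      (T_op tle kle neg R (interp_oplus kle F H'))"
    using assms(3) unfolding sound_def by blast+
  have "A \<in> heads R" using assms(4) unfolding heads_def by force
  with supported assms(6) have "H' A = T_op tle kle neg R (interp_oplus kle F H') A"
    unfolding info_le_def restrict_interp_def by metis
  also have "\<dots> = \<alpha>"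
    by (rule T_op_eqI[OF assms(2,4)
          equiv_under_mono[OF info_le_interp_oplus[OF assms(1) compat] assms(5)]])
  finally show ?thesis .
qed

lemma support_at_head:
  assumes "complete_po kle" "program F R" "(A, B) \<in> R" "equiv_under tle kle neg F B \<alpha>"
  shows "support tle kle neg F R H A \<in> {Ubot kle, \<alpha>}"
proof -
  let ?S = "(\<lambda>H'. H' A) ` {H'. info_le kle H' H \<and> sound tle kle neg F R H'}"
  have "?S \<subseteq> {Ubot kle, \<alpha>}"
  proof
    fix v assume "v \<in> ?S"
    then obtain H' where "v = H' A" and "sound tle kle neg F R H'" by blast
    with sound_eq_at_head[OF assms(1,2) this(2) assms(3,4)] show "v \<in> {Ubot kle, \<alpha>}"
      by auto
  qed
  then show ?thesis
    unfolding support_def by (simp add: lub_subset_Ubot_insert[OF assms(1)])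
qed

theorem mainTheorem3:
  fixes tle kle :: "'v \<Rightarrow> 'v \<Rightarrow> bool" and neg :: "'v \<Rightarrow> 'v"
    and F H :: "'a \<Rightarrow> 'v" and R :: "('a \<times> ('a, 't, 'v) form) set"
  assumes "inf_distrib_bilattice tle kle neg"
    and "program F R"
  shows "compatible kle (T_op tle kle neg R F) (support tle kle neg F R H)"
  unfolding compatible_def
proof (intro allI impI)
  fix A
  assume "T_op tle kle neg R F A \<noteq> Ubot kle"
    and support_defined: "support tle kle neg F R H A \<noteq> Ubot kle"
  from this(1) obtain B \<alpha> where clause: "(A, B) \<in> R" and body: "equiv_under tle kle neg F B \<alpha>"
    by (rule T_op_neq_UbotE)
  have cpo: "complete_po kle" using assms(1) unfolding inf_distrib_bilattice_def by blast
  have "T_op tle kle neg R F A = \<alpha>" by (rule T_op_eqI[OF assms(2) clause body])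
  moreover have "support tle kle neg F R H A = \<alpha>"
    using support_at_head[OF cpo assms(2) clause body] support_defined by blast
  ultimately show "T_op tle kle neg R F A = support tle kle neg F R H A" by simp
qed

end
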